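(* Let $n\in\mathbb N$ and $0<\varepsilon,\gamma<1$. Let $H$ be a $3$-graph of order $n$ with $\delta_2(H)\ge(1/2-\gamma)n$. Let $v\in V(H)$ and suppose there are at least $\varepsilon n^3$ edges $e\in E(H)$ such that $v\in L(e)$. Then $|\tilde N_{1,\gamma\varepsilon}(v)|\ge(1/4-3\gamma)n$.
   Context: $\delta_2(H)$ is the minimum over pairs of distinct vertices of the number of edges containing the pair. $K_4^-$ is the $3$-graph with $4$ vertices and $3$ edges. For a $3$-set $T$, $L(T)$ is the set of vertices $u$ such that $H[T\cup\{u\}]$ contains a copy of $K_4^-$. For $c\in\mathbb N$, a set $S$ is an $(x,y)$-connector of length $c$ if $S\cap\{x,y\}=\emptyset$, $|S|=4c-1$, and both $H[S\cup\{x\}]$, $H[S\cup\{y\}]$ contain $K_4^-$-factors (vertex-disjoint copies covering all vertices). $x,y$ are $(c,\eta)$-close if there are at least $\eta n^{4c-1}$ $(x,y)$-connectors of length $c$ in $H$. $\tilde N_{c,\eta}(x)$ is the set of vertices $(c,\eta)$-close to $x$. *)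

theory Defs
  imports Main Complex_Main
begin

definition three_graph :: "'a set \<Rightarrow> 'a set set \<Rightarrow> bool" where
  "three_graph V E \<longleftrightarrow> finite V \<and> (\<forall>e\<in>E. e \<subseteq> V \<and> card e = 3)"

definition codeg :: "'a set set \<Rightarrow> 'a \<Rightarrow> 'a \<Rightarrow> nat" where
  "codeg E x y = card {e \<in> E. x \<in> e \<and> y \<in> e}"

definition min_codeg_ge :: "'a set \<Rightarrow> 'a set set \<Rightarrow> real \<Rightarrow> bool" where
  "min_codeg_ge V E d \<longleftrightarrow> (\<forall>x\<in>V. \<forall>y\<in>V. x \<noteq> y \<longrightarrow> real (codeg E x y) \<ge> d)"

definition is_K4minus :: "'a set set \<Rightarrow> 'a set \<Rightarrow> bool" where
  "is_K4minus E Q \<longleftrightarrow> card Q = 4 \<and> card {e \<in> E. e \<subseteq> Q} \<ge> 3"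

definition contains_K4minus :: "'a set set \<Rightarrow> 'a set \<Rightarrow> bool" where
  "contains_K4minus E X \<longleftrightarrow> (\<exists>Q. Q \<subseteq> X \<and> is_K4minus E Q)"

definition has_K4minus_factor :: "'a set set \<Rightarrow> 'a set \<Rightarrow> bool" where
  "has_K4minus_factor E X \<longleftrightarrow>
     (\<exists>P. finite P \<and> \<Union>P = X \<and> (\<forall>Q\<in>P. is_K4minus E Q)
          \<and> (\<forall>Q1\<in>P. \<forall>Q2\<in>P. Q1 \<noteq> Q2 \<longrightarrow> Q1 \<inter> Q2 = {}))"

definition Lset :: "'a set \<Rightarrow> 'a set set \<Rightarrow> 'a set \<Rightarrow> 'a set" where
  "Lset V E T = {u \<in> V. contains_K4minus E (T \<union> {u})}"

definition connector :: "'a set \<Rightarrow> 'a set set \<Rightarrow> nat \<Rightarrow> 'a \<Rightarrow> 'a \<Rightarrow> 'a set \<Rightarrow> bool" where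
  "connector V E c x y S \<longleftrightarrow> S \<subseteq> V \<and> x \<notin> S \<and> y \<notin> S \<and> card S = 4 * c - 1
     \<and> has_K4minus_factor E (S \<union> {x}) \<and> has_K4minus_factor E (S \<union> {y})"

definition close :: "'a set \<Rightarrow> 'a set set \<Rightarrow> nat \<Rightarrow> real \<Rightarrow> 'a \<Rightarrow> 'a \<Rightarrow> bool" where
  "close V E c \<eta> x y \<longleftrightarrow>
     real (card {S. connector V E c x y S}) \<ge> \<eta> * real (card V) ^ (4 * c - 1)"

definition close_nbhd :: "'a set \<Rightarrow> 'a set set \<Rightarrow> nat \<Rightarrow> real \<Rightarrow> 'a \<Rightarrow> 'a set" where
  "close_nbhd V E c \<eta> x = {y \<in> V. close V E c \<eta> x y}"

end

theory Submission
  imports Defs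
begin

text \<open>Any edge e with x, y \<in> L(e) is itself an (x,y)-connector of length 1.
  A vertex u outside the edge {a,b,c} that completes two of the three faces {a,b,u}, {a,c,u},
  {b,c,u} lies in L({a,b,c}); as each pair in an edge has at least delta_2 - 1 further
  completions, 3(delta_2 - 1) \<le> (n - 3) + 2|L(e)|, i.e. |L(e)| \<ge> n/4 - 3\<gamma>n/2.
  Double counting the incidences u \<in> L(e) over the edges e with v \<in> L(e), each vertex
  u not close to v lies in fewer than \<gamma>\<epsilon>n^3 \<le> \<gamma>|{e. v \<in> L(e)}|
  of these sets, so at least n/4 - 3\<gamma>n/2 - \<gamma>n vertices are close to v.\<close>

lemma three_graph_finite_edges: "three_graph V E \<Longrightarrow> finite E"
  unfolding three_graph_def by (meson Pow_iff finite_Pow_iff finite_subset subsetI)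

lemma three_graph_edgeD:
  assumes "three_graph V E" "e \<in> E"
  shows "card e = 3" "e \<subseteq> V" "finite e"
  using assms by (auto simp: three_graph_def intro: card_ge_0_finite)

lemma is_K4minus_of_Lset:
  assumes "card e = 3" "v \<in> Lset V E e"
  shows "v \<in> V" "v \<notin> e" "is_K4minus E (insert v e)"
proof -
  from assms(2) obtain Q where Q: "Q \<subseteq> insert v e" "is_K4minus E Q"
    unfolding Lset_def contains_K4minus_def by auto
  have fin: "finite (insert v e)" using assms(1) card_ge_0_finite by force
  have "card Q = 4" using Q(2) unfolding is_K4minus_def by simp
  moreover have "card (insert v e) \<le> 4" using assms(1) card_insert_le_m1[of 4 e v] by linarith
  ultimately have Q_eq: "Q = insert v e" using card_subset_eq[OF fin Q(1)] card_mono[OF fin Q(1)] by simp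
  show "v \<in> V" using assms(2) unfolding Lset_def by simp
  show "v \<notin> e"
  proof
    assume "v \<in> e"
    then have "insert v e = e" by blast
    with Q_eq \<open>card Q = 4\<close> assms(1) show False by simp
  qed
  show "is_K4minus E (insert v e)" using Q Q_eq by simp
qed

lemma has_K4minus_factor_of_is_K4minus: "is_K4minus E Q \<Longrightarrow> has_K4minus_factor E Q"
  unfolding has_K4minus_factor_def by (intro exI[of _ "{Q}"]) auto

lemma connector_of_Lset:
  assumes "three_graph V E" "e \<in> E" "x \<in> Lset V E e" "y \<in> Lset V E e"
  shows "connector V E 1 x y e"
proof -
  note e = three_graph_edgeD[OF assms(1,2)]
  note x = is_K4minus_of_Lset[OF e(1) assms(3)] and y = is_K4minus_of_Lset[OF e(1) assms(4)]
  have "has_K4minus_factor E (e \<union> {x})" "has_K4minus_factor E (e \<union> {y})"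
    using x(3) y(3) has_K4minus_factor_of_is_K4minus by simp_all
  then show ?thesis using e x(2) y(2) unfolding connector_def by simp
qed

lemma card_edges_with_Lset_le_connectors:
  assumes "three_graph V E"
  shows "card {e \<in> E. x \<in> Lset V E e \<and> y \<in> Lset V E e} \<le> card {S. connector V E 1 x y S}"
proof (rule card_mono)
  have "{S. connector V E 1 x y S} \<subseteq> Pow V" by (auto simp: connector_def)
  moreover have "finite V" using assms unfolding three_graph_def by simp
  ultimately show "finite {S. connector V E 1 x y S}" by (simp add: finite_subset)
  show "{e \<in> E. x \<in> Lset V E e \<and> y \<in> Lset V E e} \<subseteq> {S. connector V E 1 x y S}"
    using connector_of_Lset[OF assms] by blast
qed

lemma card_edges_with_Lset_lt_if_not_close:
  assumes "three_graph V E" "u \<in> V" "u \<notin> close_nbhd V E 1 \<eta> x"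
  shows "real (card {e \<in> E. x \<in> Lset V E e \<and> u \<in> Lset V E e}) < \<eta> * real (card V) ^ 3"
proof -
  have "real (card {e \<in> E. x \<in> Lset V E e \<and> u \<in> Lset V E e}) \<le> real (card {S. connector V E 1 x u S})"
    using card_edges_with_Lset_le_connectors[OF assms(1)] by simp
  also have "\<dots> < \<eta> * real (card V) ^ 3"
    using assms(2,3) by (auto simp: close_nbhd_def close_def)
  finally show ?thesis .
qed

lemma Lset_intro:
  assumes "{a,b,c} \<in> E" "u \<in> V" "distinct [a,b,c,u]"
    and "card ({{a,b,u}, {a,c,u}, {b,c,u}} \<inter> E) \<ge> 2"
    and "finite E"
  shows "u \<in> Lset V E {a,b,c}"
proof -
  let ?Q = "insert u {a,b,c}" and ?F = "{{a,b,u}, {a,c,u}, {b,c,u}} \<inter> E"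
  have "{a,b,c} \<notin> ?F"
    using assms(3) by (auto simp: doubleton_eq_iff insert_eq_iff)
  then have "3 \<le> card (insert {a,b,c} ?F)" using assms(4) by simp
  also have "\<dots> \<le> card {f \<in> E. f \<subseteq> ?Q}"
    using assms(1,5) by (intro card_mono) auto
  finally have "card {f \<in> E. f \<subseteq> ?Q} \<ge> 3" .
  moreover have "card ?Q = 4" using assms(3) by (auto simp: card_insert_if)
  ultimately show ?thesis
    using assms(2) unfolding Lset_def contains_K4minus_def is_K4minus_def by auto
qed

lemma edge_eq_insert_pair:
  assumes "card f = 3" "a \<in> f" "b \<in> f" "a \<noteq> b"
  obtains u where "f = {a,b,u}" "u \<notin> {a,b}"
proof -
  have "card (f - {a,b}) = 1" using assms by (simp add: card_Diff_subset)
  then obtain u where u: "f - {a,b} = {u}" by (auto simp: card_1_singleton_iff)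
  then have "f = {a,b,u}" using assms(2,3) by auto
  with u show ?thesis using that by auto
qed

lemma card_codeg_extensions:
  assumes tg: "three_graph V E" and md: "min_codeg_ge V E d" and e: "{p,q,r} \<in> E"
    and dist: "distinct [p,q,r]"
  shows "d - 1 \<le> real (card {u \<in> V - {p,q,r}. {p,q,u} \<in> E})"
proof -
  let ?X = "{u \<in> V - {p,q,r}. {p,q,u} \<in> E}"
  have fV: "finite V" using tg by (simp add: three_graph_def)
  have "{p,q,r} \<subseteq> V" using three_graph_edgeD[OF tg e] by simp
  then have "d \<le> real (codeg E p q)" using md dist unfolding min_codeg_ge_def by auto
  have "{f \<in> E. p \<in> f \<and> q \<in> f} \<subseteq> (\<lambda>u. {p,q,u}) ` insert r ?X"
  proof
    fix f assume f: "f \<in> {f \<in> E. p \<in> f \<and> q \<in> f}"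
    note f_edge = three_graph_edgeD[OF tg, of f]
    obtain u where "f = {p,q,u}" "u \<notin> {p,q}"
      using edge_eq_insert_pair[of f p q] f f_edge dist by auto
    with f f_edge show "f \<in> (\<lambda>u. {p,q,u}) ` insert r ?X" by (cases "u = r") auto
  qed
  then have "codeg E p q \<le> card ((\<lambda>u. {p,q,u}) ` insert r ?X)"
    unfolding codeg_def using fV by (intro card_mono) auto
  also have "\<dots> \<le> card (insert r ?X)" using fV by (intro card_image_le) auto
  also have "\<dots> \<le> card ?X + 1" using fV by (simp add: card_insert_if)
  finally show ?thesis using \<open>d \<le> real (codeg E p q)\<close> by linarith
qed

lemma card_Lset_lower:
  assumes tg: "three_graph V E" and md: "min_codeg_ge V E d" and e: "e \<in> E"
  shows "3 * (d - 1) - (real (card V) - 3) \<le> 2 * real (card (Lset V E e))"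
proof -
  have fV: "finite V" using tg by (simp add: three_graph_def)
  note e_edge = three_graph_edgeD[OF tg e]
  then obtain a b c where abc: "e = {a,b,c}" "distinct [a,b,c]" by (auto simp: card_3_iff)
  define B where "B = V - e"
  have fB: "finite B" using fV by (simp add: B_def)
  have card_B: "real (card B) = real (card V) - 3"
    using e_edge card_mono[OF fV e_edge(2)] by (simp add: B_def card_Diff_subset of_nat_diff)
  have L_sub_B: "Lset V E e \<subseteq> B"
    using is_K4minus_of_Lset[OF e_edge(1)] unfolding B_def by blast
  define w where "w u = real (card ({{a,b,u}, {a,c,u}, {b,c,u}} \<inter> E))" for u
  have w_eq: "w u = of_bool ({a,b,u} \<in> E) + of_bool ({a,c,u} \<in> E) + of_bool ({b,c,u} \<in> E)"
    if "u \<in> B" for u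
  proof -
    have "distinct [a,b,c,u]" using that abc unfolding B_def by auto
    then have "{a,b,u} \<notin> {{a,c,u}, {b,c,u}}" "{a,c,u} \<noteq> {b,c,u}"
      by (auto simp: doubleton_eq_iff insert_eq_iff)
    moreover have "w u = (\<Sum>f\<in>{{a,b,u}, {a,c,u}, {b,c,u}}. of_bool (f \<in> E))"
      unfolding w_def by (subst sum_of_bool_eq) simp_all
    ultimately show ?thesis by simp
  qed
  have face_count: "d - 1 \<le> (\<Sum>u\<in>B. of_bool ({x,y,u} \<in> E) :: real)"
    if "{x,y,z} = e" "distinct [x,y,z]" for x y z
  proof -
    have "B \<inter> {u. {x,y,u} \<in> E} = {u \<in> V - {x,y,z}. {x,y,u} \<in> E}"
      using that(1) unfolding B_def by auto
    then show ?thesis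
      using card_codeg_extensions[OF tg md, of x y z] that e fB by simp
  qed
  have "{a,b,c} = e" "{a,c,b} = e" "{b,c,a} = e" using abc(1) by auto
  moreover have "distinct [a,b,c]" "distinct [a,c,b]" "distinct [b,c,a]" using abc(2) by auto
  ultimately have "d - 1 \<le> (\<Sum>u\<in>B. of_bool ({a,b,u} \<in> E))"
      "d - 1 \<le> (\<Sum>u\<in>B. of_bool ({a,c,u} \<in> E))"
      "d - 1 \<le> (\<Sum>u\<in>B. of_bool ({b,c,u} \<in> E))"
    by (simp_all only: face_count)
  then have "3 * (d - 1) \<le> (\<Sum>u\<in>B. of_bool ({a,b,u} \<in> E) + of_bool ({a,c,u} \<in> E) + of_bool ({b,c,u} \<in> E))"
    unfolding sum.distrib by argo
  also have "\<dots> = (\<Sum>u\<in>B. w u)" by (simp add: w_eq)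
  also have "\<dots> \<le> (\<Sum>u\<in>B. 1 + 2 * of_bool (u \<in> Lset V E e))"
  proof (intro sum_mono)
    fix u assume u: "u \<in> B"
    show "w u \<le> 1 + 2 * of_bool (u \<in> Lset V E e)"
    proof (cases "u \<in> Lset V E e")
      case True then show ?thesis using w_eq[OF u] by simp
    next
      case False
      have "distinct [a,b,c,u]" "u \<in> V" using u abc unfolding B_def by auto
      then have "card ({{a,b,u}, {a,c,u}, {b,c,u}} \<inter> E) < 2"
        using Lset_intro[of a b c E u V] False abc e three_graph_finite_edges[OF tg] by fastforce
      then show ?thesis using False unfolding w_def by simp
    qed
  qed
  also have "\<dots> = real (card B) + 2 * real (card (Lset V E e))"
    using fB L_sub_B by (simp add: sum.distrib sum_distrib_left[symmetric] Int_absorb1)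
  finally show ?thesis using card_B by simp
qed

lemma double_count_incidences:
  fixes L :: "'b \<Rightarrow> 'a set" and m t :: real
  assumes fin: "finite V" "finite A" and N: "N \<subseteq> V"
    and L: "\<And>e. e \<in> A \<Longrightarrow> L e \<subseteq> V"
    and large: "\<And>e. e \<in> A \<Longrightarrow> m \<le> real (card (L e))"
    and sparse: "\<And>u. u \<in> V - N \<Longrightarrow> real (card {e \<in> A. u \<in> L e}) \<le> t"
  shows "real (card A) * m \<le> real (card A) * real (card N) + real (card (V - N)) * t"
proof -
  have "real (card A) * m \<le> (\<Sum>e\<in>A. real (card (L e)))"
    using sum_mono[of A "\<lambda>_. m", OF large] by simp
  also have "\<dots> = (\<Sum>e\<in>A. \<Sum>u\<in>V. of_bool (u \<in> L e))"
    using fin L by (intro sum.cong) (simp_all add: Int_absorb1 Collect_mem_eq)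
  also have "\<dots> = (\<Sum>u\<in>V. real (card {e \<in> A. u \<in> L e}))"
    using fin by (subst sum.swap) (simp add: Int_def)
  also have "\<dots> = (\<Sum>u\<in>N. real (card {e \<in> A. u \<in> L e})) + (\<Sum>u\<in>V - N. real (card {e \<in> A. u \<in> L e}))"
    using fin N by (simp add: sum.subset_diff[of N V])
  also have "\<dots> \<le> (\<Sum>u\<in>N. real (card A)) + (\<Sum>u\<in>V - N. t)"
    using fin sparse by (intro add_mono sum_mono) (simp_all add: card_mono)
  finally show ?thesis by (simp add: mult.commute)
qed

theorem proposition5p7:
  fixes V :: "'a set" and E :: "'a set set" and n :: nat and \<epsilon> \<gamma> :: real and v :: 'a
  assumes "three_graph V E"
    and "card V = n"
    and "0 < \<epsilon>" and "\<epsilon> < 1" and "0 < \<gamma>" and "\<gamma> < 1"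
    and "min_codeg_ge V E ((1/2 - \<gamma>) * real n)"
    and "v \<in> V"
    and "real (card {e \<in> E. v \<in> Lset V E e}) \<ge> \<epsilon> * real n ^ 3"
  shows "real (card (close_nbhd V E 1 (\<gamma> * \<epsilon>) v)) \<ge> (1/4 - 3 * \<gamma>) * real n"
proof -
  define A where "A = {e \<in> E. v \<in> Lset V E e}"
  define N where "N = close_nbhd V E 1 (\<gamma> * \<epsilon>) v"
  have fV: "finite V" and fA: "finite A"
    using assms(1) three_graph_finite_edges[OF assms(1)] by (simp_all add: three_graph_def A_def)
  have n_pos: "real n > 0" using assms(2,8) fV card_gt_0_iff by fastforce
  have A_pos: "real (card A) > 0"
    using assms(3,9) n_pos unfolding A_def by (smt (verit) mult_pos_pos zero_less_power)
  have large: "(1/4 - 3 * \<gamma> / 2) * real n \<le> real (card (Lset V E e))" if "e \<in> A" for e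
    using card_Lset_lower[OF assms(1,7), of e] that assms(2) by (simp add: A_def field_simps)
  have sparse: "real (card {e \<in> A. u \<in> Lset V E e}) \<le> \<gamma> * real (card A)" if "u \<in> V - N" for u
  proof -
    have "real (card {e \<in> A. u \<in> Lset V E e}) < \<gamma> * (\<epsilon> * real n ^ 3)"
      using card_edges_with_Lset_lt_if_not_close[OF assms(1), of u "\<gamma> * \<epsilon>" v] that assms(2)
      by (simp add: A_def N_def conj_assoc mult.assoc)
    moreover have "\<gamma> * (\<epsilon> * real n ^ 3) \<le> \<gamma> * real (card A)"
      using assms(5,9) by (simp add: A_def)
    ultimately show ?thesis by linarith
  qed
  have "N \<subseteq> V" "\<And>e. Lset V E e \<subseteq> V" by (auto simp: N_def close_nbhd_def Lset_def)
  note incidences = double_count_incidences[OF fV fA this large sparse]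
  have "real (card (V - N)) * (\<gamma> * real (card A)) \<le> real n * (\<gamma> * real (card A))"
    using card_mono[OF fV, of "V - N"] assms(2,5) A_pos by (intro mult_right_mono) auto
  with incidences have "real (card A) * ((1/4 - 3 * \<gamma> / 2) * real n) \<le> real (card A) * (real (card N) + \<gamma> * real n)"
    by (simp add: algebra_simps)
  then have "(1/4 - 3 * \<gamma> / 2) * real n \<le> real (card N) + \<gamma> * real n"
    using A_pos by (simp only: mult_le_cancel_left_pos)
  moreover have "0 \<le> \<gamma> * real n" using assms(5) by simp
  ultimately show ?thesis unfolding N_def by (simp add: algebra_simps)
qed

end
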